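(* Let $A$ be a domain which satisfies the ascending chain condition on completely prime ideals (every ascending chain of completely prime ideals of $A$ stabilizes). Then $A$ is Hopfian.
   Context: A two-sided ideal $P$ of $A$ is \emph{completely prime} if $A/P$ is a domain. A ring $A$ is \emph{Hopfian} if $A$ is not isomorphic (as a ring) to $A/J$ for any nonzero two-sided ideal $J \triangleleft A$. *)

theory Defs
  imports "HOL-Algebra.Algebra"
begin

definition nc_domain :: "('a, 'b) ring_scheme \<Rightarrow> bool" where
  "nc_domain R \<longleftrightarrow> ring R \<and> \<one>\<^bsub>R\<^esub> \<noteq> \<zero>\<^bsub>R\<^esub> \<and>
     (\<forall>a\<in>carrier R. \<forall>b\<in>carrier R. a \<otimes>\<^bsub>R\<^esub> b = \<zero>\<^bsub>R\<^esub> \<longrightarrow> a = \<zero>\<^bsub>R\<^esub> \<or> b = \<zero>\<^bsub>R\<^esub>)"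

definition completely_prime :: "('a, 'b) ring_scheme \<Rightarrow> 'a set \<Rightarrow> bool" where
  "completely_prime R P \<longleftrightarrow> ideal P R \<and> nc_domain (R Quot P)"

definition acc_completely_prime :: "('a, 'b) ring_scheme \<Rightarrow> bool" where
  "acc_completely_prime R \<longleftrightarrow>
     (\<forall>f :: nat \<Rightarrow> 'a set. (\<forall>n. completely_prime R (f n)) \<and> (\<forall>n. f n \<subseteq> f (Suc n))
        \<longrightarrow> (\<exists>N. \<forall>n\<ge>N. f n = f N))"

definition hopfian :: "('a, 'b) ring_scheme \<Rightarrow> bool" where
  "hopfian R \<longleftrightarrow> \<not> (\<exists>J. ideal J R \<and> J \<noteq> {\<zero>\<^bsub>R\<^esub>} \<and> R \<simeq> (R Quot J))"

end

theory Submission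
  imports Defs
begin

text \<open>
  An isomorphism \<open>A \<simeq> A Quot J\<close> composed with the canonical projection is a surjective
  endomorphism \<open>\<psi>\<close> of \<open>A\<close> with kernel \<open>J\<close>. The kernels of the iterates \<open>\<psi>\<^sup>n\<close> form an
  ascending chain, and each of them is completely prime because \<open>\<psi>\<^sup>n\<close> maps into the domain \<open>A\<close>.
  So the chain stabilises, say \<open>ker \<psi>\<^sup>N\<^sup>+\<^sup>1 = ker \<psi>\<^sup>N\<close>. Writing \<open>x \<in> J\<close> as \<open>x = \<psi>\<^sup>N y\<close> by
  surjectivity, \<open>\<psi>\<^sup>N\<^sup>+\<^sup>1 y = \<psi> x = 0\<close>, hence \<open>x = \<psi>\<^sup>N y = 0\<close>; thus \<open>J = 0\<close>.
\<close>

lemma completely_primeI: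
  assumes P: "ideal P R" and one: "\<one>\<^bsub>R\<^esub> \<notin> P"
    and prime: "\<And>a b. \<lbrakk>a \<in> carrier R; b \<in> carrier R; a \<otimes>\<^bsub>R\<^esub> b \<in> P\<rbrakk> \<Longrightarrow> a \<in> P \<or> b \<in> P"
  shows "completely_prime R P"
proof -
  interpret ideal P R by (fact P)
  have rcos_eq_P_iff: "P +>\<^bsub>R\<^esub> a = P \<longleftrightarrow> a \<in> P" if "a \<in> carrier R" for a
    using rcos_const_imp_mem[OF that] a_rcos_zero[OF P] by blast
  have carrier_Quot: "carrier (R Quot P) = (+>\<^bsub>R\<^esub>) P ` carrier R"
    by (auto simp: FactRing_def A_RCOSETS_def')
  have "nc_domain (R Quot P)"
    unfolding nc_domain_def
  proof (intro conjI ballI impI)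
    show "ring (R Quot P)" by (fact quotient_is_ring)
    show "\<one>\<^bsub>R Quot P\<^esub> \<noteq> \<zero>\<^bsub>R Quot P\<^esub>"
      using one rcos_eq_P_iff[of "\<one>\<^bsub>R\<^esub>"] by (simp add: FactRing_def)
    fix U V assume "U \<in> carrier (R Quot P)" "V \<in> carrier (R Quot P)"
      and UV: "U \<otimes>\<^bsub>R Quot P\<^esub> V = \<zero>\<^bsub>R Quot P\<^esub>"
    then obtain a b where a: "a \<in> carrier R" "U = P +>\<^bsub>R\<^esub> a"
      and b: "b \<in> carrier R" "V = P +>\<^bsub>R\<^esub> b"
      unfolding carrier_Quot by blast
    have "P +>\<^bsub>R\<^esub> (a \<otimes>\<^bsub>R\<^esub> b) = P"
      using UV a b rcoset_mult_add by (simp add: FactRing_def)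
    then have "a \<in> P \<or> b \<in> P"
      using prime a b rcos_eq_P_iff by simp
    then show "U = \<zero>\<^bsub>R Quot P\<^esub> \<or> V = \<zero>\<^bsub>R Quot P\<^esub>"
      using a b rcos_eq_P_iff by (auto simp: FactRing_def)
  qed
  with P show ?thesis unfolding completely_prime_def by simp
qed

lemma completely_prime_kernel:
  assumes R: "ring R" and S: "nc_domain S" and h: "h \<in> ring_hom R S"
  shows "completely_prime R (a_kernel R S h)"
proof (rule completely_primeI)
  have "ring S" using S unfolding nc_domain_def by simp
  then interpret ring_hom_ring R S h using R h by (intro ring_hom_ringI2)
  show "ideal (a_kernel R S h) R" by (fact kernel_is_ideal)
  show "\<one>\<^bsub>R\<^esub> \<notin> a_kernel R S h"
    using S unfolding nc_domain_def a_kernel_def' by simp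
  fix a b assume "a \<in> carrier R" "b \<in> carrier R" "a \<otimes>\<^bsub>R\<^esub> b \<in> a_kernel R S h"
  then show "a \<in> a_kernel R S h \<or> b \<in> a_kernel R S h"
    using S unfolding nc_domain_def a_kernel_def' by simp
qed

lemma ring_hom_funpow:
  assumes "\<psi> \<in> ring_hom R R"
  shows "\<psi> ^^ n \<in> ring_hom R R"
proof (induction n)
  case 0
  show ?case by (simp add: id_def[symmetric])
next
  case (Suc n)
  show ?case using ring_hom_trans[OF Suc.IH assms] by (simp add: comp_def)
qed

lemma image_funpow_eq:
  assumes "f ` A = A"
  shows "(f ^^ n) ` A = A"
proof (induction n)
  case (Suc n)
  then show ?case by (metis assms funpow.simps(2) image_comp)
qed simp

lemma kernel_funpow_subset_Suc:
  assumes "ring R" "\<psi> \<in> ring_hom R R"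
  shows "a_kernel R R (\<psi> ^^ n) \<subseteq> a_kernel R R (\<psi> ^^ Suc n)"
  using ring_hom_zero[OF assms(2) assms(1) assms(1)] by (auto simp: a_kernel_def')

lemma surj_ring_endo_trivial_kernel:
  assumes R: "ring R" and \<psi>: "\<psi> \<in> ring_hom R R" and surj: "\<psi> ` carrier R = carrier R"
    and stable: "a_kernel R R (\<psi> ^^ Suc N) \<subseteq> a_kernel R R (\<psi> ^^ N)"
  shows "a_kernel R R \<psi> = {\<zero>\<^bsub>R\<^esub>}"
proof
  show "{\<zero>\<^bsub>R\<^esub>} \<subseteq> a_kernel R R \<psi>"
    using ring_hom_zero[OF \<psi> R R] ring.ring_simprules(2)[OF R] by (simp add: a_kernel_def')
  show "a_kernel R R \<psi> \<subseteq> {\<zero>\<^bsub>R\<^esub>}"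
  proof
    fix x assume "x \<in> a_kernel R R \<psi>"
    then have x: "x \<in> carrier R" "\<psi> x = \<zero>\<^bsub>R\<^esub>" by (simp_all add: a_kernel_def')
    obtain y where y: "y \<in> carrier R" "x = (\<psi> ^^ N) y"
      using x(1) image_funpow_eq[OF surj, of N] by blast
    have "y \<in> a_kernel R R (\<psi> ^^ Suc N)"
      using x y by (simp add: a_kernel_def')
    then have "(\<psi> ^^ N) y = \<zero>\<^bsub>R\<^esub>"
      using stable by (auto simp: a_kernel_def')
    with y show "x \<in> {\<zero>\<^bsub>R\<^esub>}" by simp
  qed
qed

lemma ring_iso_quotient_surj_endo:
  assumes R: "ring R" and J: "ideal J R" and iso: "R \<simeq> R Quot J"
  obtains \<psi> where "\<psi> \<in> ring_hom R R" "\<psi> ` carrier R = carrier R" "a_kernel R R \<psi> = J"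
proof -
  interpret ideal J R by (fact J)
  obtain h where h: "h \<in> ring_iso (R Quot J) R"
    using ring_iso_sym[OF R iso] unfolding is_ring_iso_def by blast
  have h_hom: "h \<in> ring_hom (R Quot J) R"
    and h_bij: "bij_betw h (carrier (R Quot J)) (carrier R)"
    using h unfolding ring_iso_def by auto
  have carrier_Quot: "carrier (R Quot J) = (+>\<^bsub>R\<^esub>) J ` carrier R"
    by (auto simp: FactRing_def A_RCOSETS_def')
  have hJ: "h J = \<zero>\<^bsub>R\<^esub>"
    using ring_hom_zero[OF h_hom quotient_is_ring R] by (simp add: FactRing_def)
  have "J +>\<^bsub>R\<^esub> \<zero>\<^bsub>R\<^esub> = J"
    using a_rcos_zero[OF J additive_subgroup.zero_closed[OF ideal.axioms(1)[OF J]]] .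
  then have J_carrier: "J \<in> carrier (R Quot J)"
    unfolding carrier_Quot using ring.ring_simprules(2)[OF R] by (metis image_eqI)
  have kernel_iff: "h (J +>\<^bsub>R\<^esub> x) = \<zero>\<^bsub>R\<^esub> \<longleftrightarrow> x \<in> J" if x: "x \<in> carrier R" for x
  proof -
    have "h (J +>\<^bsub>R\<^esub> x) = h J \<longleftrightarrow> J +>\<^bsub>R\<^esub> x = J"
      using bij_betw_imp_inj_on[OF h_bij] J_carrier x carrier_Quot by (auto dest: inj_onD)
    also have "\<dots> \<longleftrightarrow> x \<in> J"
      using rcos_const_imp_mem[OF x] a_rcos_zero[OF J] by blast
    finally show ?thesis by (simp add: hJ)
  qed
  have "h \<circ> (+>\<^bsub>R\<^esub>) J \<in> ring_hom R R"
    by (rule ring_hom_trans[OF rcos_ring_hom h_hom])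
  moreover have "(h \<circ> (+>\<^bsub>R\<^esub>) J) ` carrier R = carrier R"
    unfolding image_comp[symmetric] carrier_Quot[symmetric] using bij_betw_imp_surj_on[OF h_bij] .
  moreover have "a_kernel R R (h \<circ> (+>\<^bsub>R\<^esub>) J) = J"
    using kernel_iff Icarr by (auto simp: a_kernel_def')
  ultimately show ?thesis by (rule that)
qed

theorem mainTheorem3:
  fixes A :: "('a, 'b) ring_scheme"
  assumes "nc_domain A"
    and "acc_completely_prime A"
  shows "hopfian A"
  unfolding hopfian_def
proof
  have A: "ring A" using assms(1) unfolding nc_domain_def by simp
  assume "\<exists>J. ideal J A \<and> J \<noteq> {\<zero>\<^bsub>A\<^esub>} \<and> A \<simeq> A Quot J"
  then obtain J where J: "ideal J A" "J \<noteq> {\<zero>\<^bsub>A\<^esub>}" "A \<simeq> A Quot J" by blast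
  obtain \<psi> where \<psi>: "\<psi> \<in> ring_hom A A" "\<psi> ` carrier A = carrier A" "a_kernel A A \<psi> = J"
    using ring_iso_quotient_surj_endo[OF A J(1) J(3)] by blast
  let ?K = "\<lambda>n. a_kernel A A (\<psi> ^^ n)"
  have "\<forall>n. completely_prime A (?K n)"
    using completely_prime_kernel[OF A assms(1) ring_hom_funpow[OF \<psi>(1)]] by blast
  moreover have "\<forall>n. ?K n \<subseteq> ?K (Suc n)"
    using kernel_funpow_subset_Suc[OF A \<psi>(1)] by blast
  ultimately obtain N where stable: "\<forall>n\<ge>N. ?K n = ?K N"
    using assms(2)[unfolded acc_completely_prime_def, rule_format, of ?K] by blast
  have "?K (Suc N) \<subseteq> ?K N"
    using stable[rule_format, of "Suc N"] by simp
  then have "J = {\<zero>\<^bsub>A\<^esub>}"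
    using surj_ring_endo_trivial_kernel[OF A \<psi>(1,2)] \<psi>(3) by simp
  with J(2) show False ..
qed

end
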